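(* Let $q\geq4$ be an even integer, $n=q^2-1$, and let $A_0=I,A_1,A_2,A_3$ be the adjacency matrices of a symmetric 3-class association scheme on $n$ points with first eigenmatrix \[ P=\begin{bmatrix}1&\frac{q^2}{2}-q&\frac{q^2}{2}&q-2\\ 1&\frac q2&-\frac q2&-1\\ 1&-\frac q2+1&-\frac q2&q-2\\ 1&-\frac q2&\frac q2&-1\end{bmatrix}. \] For a real number $r$ with $r^2=(17q-1)(q-1)$ put $a_{0,1}=\frac{-(q-1)(q-2)+(q+2)r}{2q(q+1)}$, $a_{0,2}=\frac{(q+2)(q-1)-(q-2)r}{2q(q-3)}$, $a_{0,3}=\frac{5q^2-2q-19-(q-1)r}{2(q+1)(q-3)}$, $a_{1,2}=\frac{2(-q^4+2q^3+4q^2-10q+1+(q-1)r)}{q^2(q+1)(q-3)}$, $a_{1,3}=-a_{0,2}$, and let $W=A_0+w_1A_1+w_2A_2+w_3A_3$ where $w_1+\frac1{w_1}=a_{0,1}$ and $w_i=\frac{w_1^2-1}{a_{1,i}w_1-a_{0,i}}$ for $i=2,3$ (this $W$ is a type-II matrix). Let $W_+$ be such a matrix obtained with $r>0$ and $W_-$ such a matrix obtained with $r<0$. Then $W_+$ and $W_-$ are inequivalent.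
   Context: A symmetric association scheme with adjacency matrices $A_0=I,\dots,A_d$: symmetric $(0,1)$-matrices summing to $J$ whose span is closed under multiplication; with primitive idempotents $E_0=\frac1nJ,\dots,E_d$, the first eigenmatrix is defined by $A_j=\sum_iP_{i,j}E_i$. A type-II matrix is an $n\times n$ matrix $W$ with nonzero complex entries and $W(W^{(-)})^\top=nI$, $W^{(-)}$ the entrywise inverse. Two type-II matrices $W_1,W_2$ are equivalent if there exist invertible diagonal matrices $D,D'$ and permutation matrices $T,T'$ with $DW_1D'=TW_2T'$. *)

theory Defs
  imports "HOL-Analysis.Analysis"
begin

definition cscale :: "complex \<Rightarrow> complex^'n^'n \<Rightarrow> complex^'n^'n" where
  "cscale c M = (\<chi> a b. c * M $ a $ b)"

definition allones :: "complex^'n^'n" where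
  "allones = (\<chi> a b. 1)"

definition assoc_scheme :: "nat \<Rightarrow> (nat \<Rightarrow> complex^'n^'n) \<Rightarrow> bool" where
  "assoc_scheme d A \<longleftrightarrow>
     A 0 = mat 1 \<and>
     (\<forall>i\<le>d. (\<forall>a b. A i $ a $ b \<in> {0, 1}) \<and> transpose (A i) = A i \<and> A i \<noteq> 0) \<and>
     (\<Sum>i\<le>d. A i) = allones \<and>
     (\<forall>i\<le>d. \<forall>j\<le>d. \<exists>c. A i ** A j = (\<Sum>k\<le>d. cscale (c k) (A k)))"

definition first_eigenmatrix ::
  "nat \<Rightarrow> (nat \<Rightarrow> complex^'n^'n) \<Rightarrow> (nat \<Rightarrow> nat \<Rightarrow> complex) \<Rightarrow> bool" where
  "first_eigenmatrix d A P \<longleftrightarrow>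
     (\<exists>E :: nat \<Rightarrow> complex^'n^'n.
        E 0 = cscale (1 / of_nat CARD('n)) allones \<and>
        (\<forall>i\<le>d. E i \<noteq> 0) \<and>
        (\<forall>i\<le>d. \<forall>j\<le>d. E i ** E j = (if i = j then E i else 0)) \<and>
        (\<Sum>i\<le>d. E i) = mat 1 \<and>
        (\<forall>j\<le>d. A j = (\<Sum>i\<le>d. cscale (P i j) (E i))))"

definition entry_inv :: "complex^'n^'n \<Rightarrow> complex^'n^'n" where
  "entry_inv W = (\<chi> a b. inverse (W $ a $ b))"

definition type_II :: "complex^'n^'n \<Rightarrow> bool" where
  "type_II W \<longleftrightarrow> (\<forall>a b. W $ a $ b \<noteq> 0) \<and>
     W ** transpose (entry_inv W) = cscale (of_nat CARD('n)) (mat 1)"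

definition diag_invertible :: "complex^'n^'n \<Rightarrow> bool" where
  "diag_invertible D \<longleftrightarrow> (\<forall>a b. a \<noteq> b \<longrightarrow> D $ a $ b = 0) \<and> invertible D"

definition perm_matrix :: "complex^'n^'n \<Rightarrow> bool" where
  "perm_matrix T \<longleftrightarrow> (\<exists>\<sigma>. \<sigma> permutes (UNIV :: 'n set) \<and>
     T = (\<chi> a b. if \<sigma> a = b then 1 else 0))"

definition type_II_equiv :: "complex^'n^'n \<Rightarrow> complex^'n^'n \<Rightarrow> bool" where
  "type_II_equiv W1 W2 \<longleftrightarrow> (\<exists>D D' T T'. diag_invertible D \<and> diag_invertible D' \<and>
     perm_matrix T \<and> perm_matrix T' \<and> D ** W1 ** D' = T ** W2 ** T')"

definition Pmat :: "nat \<Rightarrow> nat \<Rightarrow> nat \<Rightarrow> real" where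
  "Pmat qn i j = (let q = real qn in
     [[1, q^2/2 - q, q^2/2, q - 2],
      [1, q/2, -q/2, -1],
      [1, -q/2 + 1, -q/2, q - 2],
      [1, -q/2, q/2, -1]] ! i ! j)"

definition a01 :: "nat \<Rightarrow> real \<Rightarrow> real" where
  "a01 qn r = (let q = real qn in (-(q-1)*(q-2) + (q+2)*r) / (2*q*(q+1)))"

definition a02 :: "nat \<Rightarrow> real \<Rightarrow> real" where
  "a02 qn r = (let q = real qn in ((q+2)*(q-1) - (q-2)*r) / (2*q*(q-3)))"

definition a03 :: "nat \<Rightarrow> real \<Rightarrow> real" where
  "a03 qn r = (let q = real qn in (5*q^2 - 2*q - 19 - (q-1)*r) / (2*(q+1)*(q-3)))"

definition a12 :: "nat \<Rightarrow> real \<Rightarrow> real" where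
  "a12 qn r = (let q = real qn in
     2*(-(q^4) + 2*q^3 + 4*q^2 - 10*q + 1 + (q-1)*r) / (q^2*(q+1)*(q-3)))"

definition a13 :: "nat \<Rightarrow> real \<Rightarrow> real" where
  "a13 qn r = - a02 qn r"

definition wden2 :: "nat \<Rightarrow> real \<Rightarrow> complex \<Rightarrow> complex" where
  "wden2 q r w1 = of_real (a12 q r) * w1 - of_real (a02 q r)"

definition wden3 :: "nat \<Rightarrow> real \<Rightarrow> complex \<Rightarrow> complex" where
  "wden3 q r w1 = of_real (a13 q r) * w1 - of_real (a03 q r)"

definition Wmat :: "(nat \<Rightarrow> complex^'n^'n) \<Rightarrow> nat \<Rightarrow> real \<Rightarrow> complex \<Rightarrow> complex^'n^'n" where
  "Wmat A q r w1 = A 0 + cscale w1 (A 1)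
     + cscale ((w1^2 - 1) / wden2 q r w1) (A 2)
     + cscale ((w1^2 - 1) / wden3 q r w1) (A 3)"

end

theory Submission
  imports Defs
begin

text \<open>Rescaling rows and columns leaves the cross ratio \<open>W a b * W b a / (W a a * W b b)\<close>
  unchanged, and permuting them keeps a real matrix real, so every cross ratio of a matrix
  equivalent to a real matrix is real. For \<open>r < 0\<close> one has \<open>a01 < -2\<close>, so \<open>w + 1/w = a01\<close>
  forces a real \<open>w\<close> and \<open>W\<^sub>-\<close> is real. For \<open>r > 0\<close> one has \<open>0 < a01 < 2\<close>, so \<open>w\<close> lies on the
  unit circle off both axes and \<open>w\<^sup>2\<close> is not real; but \<open>w\<^sup>2\<close> is the cross ratio of \<open>W\<^sub>+\<close> at any
  pair \<open>(a, b)\<close> of the first relation.\<close>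

lemma add_inverse_eq_of_real_Re_Im:
  fixes w :: complex
  assumes "w \<noteq> 0" "w + 1 / w = of_real a"
  shows "(Re w)\<^sup>2 - (Im w)\<^sup>2 + 1 = a * Re w" and "2 * Re w * Im w = a * Im w"
proof -
  have "w\<^sup>2 + 1 = of_real a * w"
    using assms by (simp add: field_simps power2_eq_square)
  from arg_cong[OF this, of Re] arg_cong[OF this, of Im]
  show "(Re w)\<^sup>2 - (Im w)\<^sup>2 + 1 = a * Re w" and "2 * Re w * Im w = a * Im w"
    by (simp_all add: power2_eq_square)
qed

lemma add_inverse_eq_of_real_imp_Reals:
  fixes w :: complex
  assumes "w \<noteq> 0" "w + 1 / w = of_real a" "a\<^sup>2 \<ge> 4"
  shows "w \<in> \<real>"
proof -
  note Re_eq = add_inverse_eq_of_real_Re_Im[OF assms(1,2)]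
  have "Im w = 0"
  proof (rule ccontr)
    assume "Im w \<noteq> 0"
    then have "a = 2 * Re w" using Re_eq(2) by simp
    with Re_eq(1) have "(Im w)\<^sup>2 = 1 - a\<^sup>2 / 4" by (simp add: power2_eq_square algebra_simps)
    moreover have "(Im w)\<^sup>2 > 0" using \<open>Im w \<noteq> 0\<close> by simp
    ultimately show False using assms(3) by linarith
  qed
  then show ?thesis by (simp add: complex_is_Real_iff)
qed

lemma add_inverse_eq_of_real_power2_notin_Reals:
  fixes w :: complex
  assumes "w \<noteq> 0" "w + 1 / w = of_real a" "a\<^sup>2 < 4" "a \<noteq> 0"
  shows "w\<^sup>2 \<notin> \<real>"
proof
  assume "w\<^sup>2 \<in> \<real>"
  then have "Re w = 0 \<or> Im w = 0" by (auto simp: complex_is_Real_iff power2_eq_square)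
  moreover note Re_eq = add_inverse_eq_of_real_Re_Im[OF assms(1,2)]
  moreover have "Im w \<noteq> 0"
  proof
    assume "Im w = 0"
    with Re_eq(1) have "(2 * Re w - a)\<^sup>2 = a\<^sup>2 - 4" by (simp add: power2_eq_square algebra_simps)
    with assms(3) show False by (metis diff_less_0_iff_less zero_le_power2 not_le)
  qed
  ultimately show False using assms(4) by auto
qed

lemma a01_pos_lt_two:
  assumes "q \<ge> 4" and "r\<^sup>2 = (17 * real q - 1) * (real q - 1)" and "r > 0"
  shows "0 < a01 q r" and "a01 q r < 2"
proof -
  define x where "x = real q"
  have x: "x \<ge> 4" using assms(1) by (simp add: x_def)
  have r_sq: "((x + 2) * r)\<^sup>2 = (x + 2)\<^sup>2 * ((17 * x - 1) * (x - 1))"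
    using assms(2) by (simp add: x_def power_mult_distrib)
  have "((x + 2) * r)\<^sup>2 < (5 * x\<^sup>2 + x + 2)\<^sup>2"
  proof -
    have "(5 * x\<^sup>2 + x + 2)\<^sup>2 - (x + 2)\<^sup>2 * ((17 * x - 1) * (x - 1)) = 8 * x * (x - 3)\<^sup>2 * (x + 1)"
      by (simp add: power2_eq_square algebra_simps)
    moreover have "8 * x * (x - 3)\<^sup>2 * (x + 1) > 0" using x by simp
    ultimately show ?thesis using r_sq by linarith
  qed
  then have upper: "(x + 2) * r < 5 * x\<^sup>2 + x + 2"
    by (rule power_less_imp_less_base) (use x in simp)
  have "((x - 1) * (x - 2))\<^sup>2 < ((x + 2) * r)\<^sup>2"
  proof -
    have "(x + 2)\<^sup>2 * ((17 * x - 1) * (x - 1)) - ((x - 1) * (x - 2))\<^sup>2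
          = 8 * x * (x - 1) * (x + 1) * (2 * x + 7)"
      by (simp add: power2_eq_square algebra_simps)
    moreover have "8 * x * (x - 1) * (x + 1) * (2 * x + 7) > 0" using x by simp
    ultimately show ?thesis using r_sq by linarith
  qed
  then have lower: "(x - 1) * (x - 2) < (x + 2) * r"
    by (rule power_less_imp_less_base) (use x assms(3) in simp)
  have a01: "a01 q r = (- (x - 1) * (x - 2) + (x + 2) * r) / (2 * x * (x + 1))"
    by (simp add: a01_def x_def Let_def)
  have "2 * x * (x + 1) > 0" using x by simp
  then show "0 < a01 q r" and "a01 q r < 2"
    unfolding a01 using upper lower
    by (simp_all add: zero_less_divide_iff divide_less_eq algebra_simps power2_eq_square)
qed

lemma a01_neg_lt_minus_two:
  assumes "q \<ge> 4" and "r\<^sup>2 = (17 * real q - 1) * (real q - 1)" and "r < 0"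
  shows "a01 q r < -2"
proof -
  define x t where "x = real q" and "t = - r"
  have x: "x \<ge> 4" using assms(1) by (simp add: x_def)
  have t: "t > 0" using assms(3) by (simp add: t_def)
  have "(3 * x\<^sup>2 + 7 * x - 2)\<^sup>2 < ((x + 2) * t)\<^sup>2"
  proof -
    have "((x + 2) * t)\<^sup>2 = (x + 2)\<^sup>2 * ((17 * x - 1) * (x - 1))"
      using assms(2) by (simp add: x_def t_def power_mult_distrib)
    moreover have "(x + 2)\<^sup>2 * ((17 * x - 1) * (x - 1)) - (3 * x\<^sup>2 + 7 * x - 2)\<^sup>2
                   = 8 * x * (x + 1) * (x * x - 5)"
      by (simp add: power2_eq_square algebra_simps)
    moreover have "x * x \<ge> 4 * 4" using x by (intro mult_mono) auto
    then have "8 * x * (x + 1) * (x * x - 5) > 0" using x by simp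
    ultimately show ?thesis by linarith
  qed
  then have bound: "3 * x\<^sup>2 + 7 * x - 2 < (x + 2) * t"
    by (rule power_less_imp_less_base) (use x t in simp)
  have a01: "a01 q r = (- (x - 1) * (x - 2) - (x + 2) * t) / (2 * x * (x + 1))"
    by (simp add: a01_def x_def t_def Let_def)
  have "2 * x * (x + 1) > 0" using x by simp
  then show ?thesis
    unfolding a01 using bound by (simp add: divide_less_eq algebra_simps power2_eq_square)
qed

definition real_matrix :: "complex^'n^'m \<Rightarrow> bool" where
  "real_matrix M \<longleftrightarrow> (\<forall>i j. M $ i $ j \<in> \<real>)"

definition cross_ratio :: "complex^'n^'n \<Rightarrow> 'n \<Rightarrow> 'n \<Rightarrow> complex" where
  "cross_ratio W a b = W $ a $ b * W $ b $ a / (W $ a $ a * W $ b $ b)"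

lemma real_matrix_mult: "real_matrix M \<Longrightarrow> real_matrix N \<Longrightarrow> real_matrix (M ** N)"
  unfolding real_matrix_def matrix_matrix_mult_def by auto

lemma perm_matrix_real: "perm_matrix T \<Longrightarrow> real_matrix T"
  unfolding perm_matrix_def real_matrix_def by auto

lemma diag_invertible_mult_left:
  assumes "diag_invertible D"
  shows "(D ** M) $ i $ j = D $ i $ i * M $ i $ j"
proof -
  have "(D ** M) $ i $ j = (\<Sum>k\<in>UNIV. if k = i then D $ i $ i * M $ i $ j else 0)"
    unfolding matrix_matrix_mult_def vec_lambda_beta
    by (rule sum.cong) (use assms in \<open>auto simp: diag_invertible_def\<close>)
  then show ?thesis by simp
qed

lemma diag_invertible_mult_right:
  assumes "diag_invertible D"
  shows "(M ** D) $ i $ j = M $ i $ j * D $ j $ j"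
proof -
  have "(M ** D) $ i $ j = (\<Sum>k\<in>UNIV. if k = j then M $ i $ j * D $ j $ j else 0)"
    unfolding matrix_matrix_mult_def vec_lambda_beta
    by (rule sum.cong) (use assms in \<open>auto simp: diag_invertible_def\<close>)
  then show ?thesis by simp
qed

lemma diag_invertible_diag_nonzero:
  assumes "diag_invertible D"
  shows "D $ i $ i \<noteq> 0"
proof -
  obtain B where "D ** B = mat 1"
    using assms unfolding diag_invertible_def invertible_def by blast
  then have "D $ i $ i * B $ i $ i = 1"
    using diag_invertible_mult_left[OF assms, of B i i] by (simp add: mat_def)
  then show ?thesis by auto
qed

lemma cross_ratio_diag_scale:
  assumes "diag_invertible D" and "diag_invertible D'"
  shows "cross_ratio (D ** W ** D') a b = cross_ratio W a b"
  using diag_invertible_diag_nonzero[OF assms(1)] diag_invertible_diag_nonzero[OF assms(2)]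
  by (simp add: cross_ratio_def diag_invertible_mult_left[OF assms(1)]
      diag_invertible_mult_right[OF assms(2)])

lemma type_II_equiv_real_imp_cross_ratio_real:
  assumes "type_II_equiv W1 W2" and "real_matrix W2"
  shows "cross_ratio W1 a b \<in> \<real>"
proof -
  obtain D D' T T' where D: "diag_invertible D" "diag_invertible D'"
    and T: "perm_matrix T" "perm_matrix T'" and eq: "D ** W1 ** D' = T ** W2 ** T'"
    using assms(1) unfolding type_II_equiv_def by blast
  have "real_matrix (D ** W1 ** D')"
    unfolding eq by (intro real_matrix_mult perm_matrix_real T assms(2))
  then have "cross_ratio (D ** W1 ** D') a b \<in> \<real>"
    unfolding real_matrix_def cross_ratio_def by auto
  then show ?thesis by (simp add: cross_ratio_diag_scale[OF D])
qed

lemma assoc_scheme_entry_01: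
  assumes "assoc_scheme d A" and "i \<le> d"
  shows "A i $ x $ y = 0 \<or> A i $ x $ y = 1"
  using assms unfolding assoc_scheme_def by blast

lemma assoc_scheme_symmetric:
  assumes "assoc_scheme d A" and "i \<le> d"
  shows "A i $ y $ x = A i $ x $ y"
proof -
  have "transpose (A i) = A i" using assms unfolding assoc_scheme_def by blast
  then have "transpose (A i) $ x $ y = A i $ x $ y" by simp
  then show ?thesis by (simp add: transpose_def)
qed

lemma assoc_scheme_entry_sum:
  assumes "assoc_scheme d A"
  shows "(\<Sum>i\<le>d. A i $ x $ y) = 1"
proof -
  have "(\<Sum>i\<le>d. A i) = allones" using assms unfolding assoc_scheme_def by blast
  then have "(\<Sum>i\<le>d. A i) $ x $ y = 1" by (simp add: allones_def)
  then show ?thesis by (simp add: sum_component)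
qed

lemma assoc_scheme_other_entry_zero:
  assumes sch: "assoc_scheme d A" and "i \<le> d" "j \<le> d" "j \<noteq> i" and "A i $ x $ y = 1"
  shows "A j $ x $ y = 0"
proof (rule ccontr)
  assume "A j $ x $ y \<noteq> 0"
  then have "A j $ x $ y = 1" using assoc_scheme_entry_01[OF sch \<open>j \<le> d\<close>] by blast
  have nonneg: "Re (A k $ x $ y) \<ge> 0" if "k \<in> {..d}" for k
    using assoc_scheme_entry_01[OF sch, of k x y] that by auto
  have "Re (A i $ x $ y) + Re (A j $ x $ y) = (\<Sum>k\<in>{i, j}. Re (A k $ x $ y))"
    using assms(4) by simp
  also have "\<dots> \<le> (\<Sum>k\<le>d. Re (A k $ x $ y))"
    using assms(2,3) by (intro sum_mono2) (auto intro: nonneg)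
  also have "\<dots> = 1"
    using arg_cong[OF assoc_scheme_entry_sum[OF sch], of Re] by (simp add: Re_sum)
  finally show False using assms(5) \<open>A j $ x $ y = 1\<close> by simp
qed

lemma assoc_scheme_nonzero_entry:
  assumes "assoc_scheme d A" and "i \<le> d"
  obtains a b where "A i $ a $ b = 1"
proof -
  have "A i \<noteq> 0" using assms unfolding assoc_scheme_def by blast
  then obtain a b where "A i $ a $ b \<noteq> 0" by (metis vec_eq_iff zero_index)
  with assoc_scheme_entry_01[OF assms] that show ?thesis by blast
qed

lemma Wmat_entry:
  "Wmat A q r w $ x $ y = A 0 $ x $ y + w * A 1 $ x $ y
     + (w\<^sup>2 - 1) / wden2 q r w * A 2 $ x $ y + (w\<^sup>2 - 1) / wden3 q r w * A 3 $ x $ y"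
  by (simp add: Wmat_def cscale_def)

lemma assoc_scheme_3_Wmat_cross_ratio:
  assumes sch: "assoc_scheme 3 A"
  obtains a b where "cross_ratio (Wmat A q r w) a b = w\<^sup>2"
proof -
  have "1 \<le> (3::nat)" by simp
  then obtain a b where ab: "A 1 $ a $ b = 1" by (rule assoc_scheme_nonzero_entry[OF sch])
  have ba: "A 1 $ b $ a = 1" using ab assoc_scheme_symmetric[OF sch, of 1 b a] by simp
  have A0: "A 0 = mat 1" using sch unfolding assoc_scheme_def by blast
  have diag: "A k $ x $ x = 0" if "k \<in> {1, 2, 3}" for k x
    using assoc_scheme_other_entry_zero[OF sch, of 0 k x x] that A0 by (auto simp: mat_def)
  have "a \<noteq> b" using ab diag[of 1 a] by auto
  then have off: "A k $ a $ b = 0" "A k $ b $ a = 0" if "k \<in> {0, 2, 3}" for k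
    using assoc_scheme_other_entry_zero[OF sch, of 1 k] ab ba that A0 by (auto simp: mat_def)
  have "Wmat A q r w $ a $ b = w" "Wmat A q r w $ b $ a = w"
    using ab ba off[of 0] off[of 2] off[of 3] by (simp_all add: Wmat_entry)
  moreover have "Wmat A q r w $ a $ a = 1" "Wmat A q r w $ b $ b = 1"
    using A0 diag[of 1] diag[of 2] diag[of 3] by (simp_all add: Wmat_entry mat_def)
  ultimately show ?thesis by (intro that[of a b]) (simp add: cross_ratio_def power2_eq_square)
qed

lemma assoc_scheme_3_Wmat_real:
  assumes sch: "assoc_scheme 3 A" and "w \<in> \<real>"
  shows "real_matrix (Wmat A q r w)"
proof -
  have "A i $ x $ y \<in> \<real>" if "i \<le> 3" for i x y
    using assoc_scheme_entry_01[OF sch that, of x y] by auto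
  moreover have "wden2 q r w \<in> \<real>" "wden3 q r w \<in> \<real>"
    using assms(2) by (auto simp: wden2_def wden3_def)
  ultimately show ?thesis
    using assms(2) by (simp add: real_matrix_def Wmat_entry)
qed

theorem proposition5p6:
  fixes q :: nat and A :: "nat \<Rightarrow> complex^'n^'n"
    and rp rm :: real and wp wm :: complex
  assumes "even q" and "q \<ge> 4" and "CARD('n) = q^2 - 1"
    and "assoc_scheme 3 A"
    and "first_eigenmatrix 3 A (\<lambda>i j. complex_of_real (Pmat q i j))"
    and "rp^2 = (17 * real q - 1) * (real q - 1)" and "rp > 0"
    and "rm^2 = (17 * real q - 1) * (real q - 1)" and "rm < 0"
    and "wp \<noteq> 0" and "wp + 1 / wp = complex_of_real (a01 q rp)"
    and "wm \<noteq> 0" and "wm + 1 / wm = complex_of_real (a01 q rm)"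
    and "wden2 q rp wp \<noteq> 0" and "wden3 q rp wp \<noteq> 0"
    and "wden2 q rm wm \<noteq> 0" and "wden3 q rm wm \<noteq> 0"
  shows "\<not> type_II_equiv (Wmat A q rp wp) (Wmat A q rm wm)"
proof
  assume equiv: "type_II_equiv (Wmat A q rp wp) (Wmat A q rm wm)"
  have "wm \<in> \<real>"
  proof (rule add_inverse_eq_of_real_imp_Reals[OF assms(12,13)])
    have "a01 q rm < -2" using a01_neg_lt_minus_two assms(2,8,9) by blast
    then show "(a01 q rm)\<^sup>2 \<ge> 4" using abs_le_square_iff[of 2 "a01 q rm"] by simp
  qed
  then have "real_matrix (Wmat A q rm wm)" by (rule assoc_scheme_3_Wmat_real[OF assms(4)])
  with equiv have real: "cross_ratio (Wmat A q rp wp) a b \<in> \<real>" for a b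
    by (rule type_II_equiv_real_imp_cross_ratio_real)
  have "wp\<^sup>2 \<notin> \<real>"
  proof (rule add_inverse_eq_of_real_power2_notin_Reals[OF assms(10,11)])
    have "0 < a01 q rp" "a01 q rp < 2" using a01_pos_lt_two assms(2,6,7) by blast+
    then show "(a01 q rp)\<^sup>2 < 4" "a01 q rp \<noteq> 0"
      using power_strict_mono[of "a01 q rp" 2 2] by simp_all
  qed
  with assoc_scheme_3_Wmat_cross_ratio[OF assms(4)] real show False by metis
qed

end
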